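(* Let $A\in\mathbb{R}^{n\times n}$, $B\in\mathbb{R}^{n\times m}$, $E\in\mathbb{R}^{n\times z}$, $C\in\mathbb{R}^{q\times n}$, $D\in\mathbb{R}^{q\times m}$, let $\gamma\ge 0$, and let $\mathcal{S}\subseteq\mathbb{R}^{m\times n}$ be a subspace with representation matrix $S=[S_1\ \cdots\ S_k]$. Suppose there exist $P\in\mathbb{S}^n$, $Q\in\mathbb{S}^q$, $R\in\Upsilon(S)$ and $L\in\mathcal{S}$ such that \[ \begin{bmatrix} P-EE^\top & AR+BL\\ (AR+BL)^\top & R+R^\top-P\end{bmatrix}\succ 0,\qquad \begin{bmatrix} Q & CR+DL\\ (CR+DL)^\top & R+R^\top-P\end{bmatrix}\succ 0, \] \[ P\succ 0,\qquad \operatorname{Tr}(Q)\le\gamma^2 . \] Then $R$ is nonsingular and $K=LR^{-1}$ belongs to $\mathcal{S}$ and is a $\gamma$-suboptimal $H_2$ controller for the system $x(t+1)=Ax(t)+Bu(t)+E\xi(t)$, $y(t)=Cx(t)+Du(t)$.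
   Context: Consider the discrete-time system $x(t+1)=Ax(t)+Bu(t)+E\xi(t)$, $y(t)=Cx(t)+Du(t)$ with state $x\in\mathbb{R}^n$, input $u\in\mathbb{R}^m$, exogenous input $\xi\in\mathbb{R}^z$, output $y\in\mathbb{R}^q$. For a static feedback $u=Kx$, $K\in\mathbb{R}^{m\times n}$, the closed loop is $x(t+1)=(A+BK)x(t)+E\xi(t)$, $y(t)=(C+DK)x(t)$; let $G_K(z)$ denote its transfer function from $\xi$ to $y$. $K$ is called a $\gamma$-suboptimal $H_2$ controller if $\|G_K(z)\|_{H_2}\le\gamma$. $\mathbb{S}^n$ denotes the real symmetric $n\times n$ matrices. If $S_1,\dots,S_k\in\mathbb{R}^{m\times n}$ form a basis of the subspace $\mathcal{S}$, the matrix $S=[S_1\ S_2\ \cdots\ S_k]\in\mathbb{R}^{m\times nk}$ is a representation matrix of $\mathcal{S}$, and $\Upsilon(S):=\{R\in\mathbb{R}^{n\times n}\mid \exists\Lambda\in\mathbb{S}^k:\ S(I_k\otimes R)=S(\Lambda\otimes I_n)\}$, where $\otimes$ is the Kronecker product. *)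

theory Defs
  imports "HOL-Analysis.Analysis"
begin

text \<open>Matrices are type-indexed: real^'c^'r is an r x c matrix. \<close>

definition sym_mat :: "real^'n^'n \<Rightarrow> bool" where
  "sym_mat M \<longleftrightarrow> transpose M = M"

definition pos_def :: "real^'n^'n \<Rightarrow> bool" where
  "pos_def M \<longleftrightarrow> sym_mat M \<and> (\<forall>x. x \<noteq> 0 \<longrightarrow> x \<bullet> (M *v x) > 0)"

definition block2 :: "real^'c1^'r1 \<Rightarrow> real^'c2^'r1 \<Rightarrow> real^'c1^'r2 \<Rightarrow> real^'c2^'r2
      \<Rightarrow> real^('c1 + 'c2)^('r1 + 'r2)" where
  "block2 M11 M12 M21 M22 = (\<chi> i j. case i of
      Inl a \<Rightarrow> (case j of Inl b \<Rightarrow> M11 $ a $ b | Inr b \<Rightarrow> M12 $ a $ b)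
    | Inr a \<Rightarrow> (case j of Inl b \<Rightarrow> M21 $ a $ b | Inr b \<Rightarrow> M22 $ a $ b))"

definition kron :: "real^'c1^'r1 \<Rightarrow> real^'c2^'r2 \<Rightarrow> real^('c1 \<times> 'c2)^('r1 \<times> 'r2)" where
  "kron X Y = (\<chi> i j. X $ fst i $ fst j * Y $ snd i $ snd j)"

text \<open>Representation matrix S = [S_1 ... S_k] of a family of m x n matrices indexed by 'k.\<close>
definition rep_matrix :: "('k::finite \<Rightarrow> real^'n^'m) \<Rightarrow> real^('k \<times> 'n)^'m" where
  "rep_matrix Sf = (\<chi> i jl. Sf (fst jl) $ i $ snd jl)"

definition Upsilon :: "real^('k::finite \<times> 'n)^'m \<Rightarrow> (real^'n^'n) set" where
  "Upsilon S = {R. \<exists>\<Lambda>::real^'k^'k. sym_mat \<Lambda> \<and>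
                    S ** kron (mat 1 :: real^'k^'k) R = S ** kron \<Lambda> (mat 1 :: real^'n^'n)}"

primrec matpow :: "real^'n^'n \<Rightarrow> nat \<Rightarrow> real^'n^'n" where
  "matpow M 0 = mat 1"
| "matpow M (Suc t) = M ** matpow M t"

text \<open>H2 norm of the transfer function G(z) = Cc (zI - Ac)^{-1} Ec of the system
  x(t+1) = Ac x(t) + Ec xi(t), y(t) = Cc x(t): square root of the sum of the squared
  Frobenius norms of its impulse response (Markov parameters) Cc Ac^t Ec; infinite if the
  sum diverges.\<close>
definition markov_sq :: "real^'n^'n \<Rightarrow> real^'z^'n \<Rightarrow> real^'n^'q \<Rightarrow> nat \<Rightarrow> real" where
  "markov_sq Ac Ec Cc t = (let G = Cc ** matpow Ac t ** Ec in trace (G ** transpose G))"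

definition h2_norm :: "real^'n^'n \<Rightarrow> real^'z^'n \<Rightarrow> real^'n^'q \<Rightarrow> ereal" where
  "h2_norm Ac Ec Cc = (if summable (markov_sq Ac Ec Cc)
                       then ereal (sqrt (suminf (markov_sq Ac Ec Cc))) else \<infinity>)"

definition gamma_subopt_H2 ::
  "real^'n^'n \<Rightarrow> real^'m^'n \<Rightarrow> real^'z^'n \<Rightarrow> real^'n^'q \<Rightarrow> real^'m^'q \<Rightarrow> real
     \<Rightarrow> real^'n^'m \<Rightarrow> bool" where
  "gamma_subopt_H2 A B E C D \<gamma> K \<longleftrightarrow> h2_norm (A + B ** K) E (C + D ** K) \<le> ereal \<gamma>"

end

theory Submission
  imports Defs
begin

text \<open>Put K = L R^-1 and write the block LMIs as [[W, G R], [(G R)^T, R + R^T - P]] \<succ> 0 with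
  G = A + BK, W = P - E E^T resp. G = C + DK, W = Q. Evaluating the form at (u, v) with
  v = -R^-1 P G^T u and adding (v + G^T u)^T P (v + G^T u) \<ge> 0 gives G P G^T \<preceq> W; the lower right
  block alone forces R to be injective. The first inequality, (A + BK) P (A + BK)^T \<preceq> P - E E^T,
  telescopes along the powers of A + BK, so the squared Frobenius norms of the Markov parameters
  (C + DK)(A + BK)^t E sum to at most trace ((C + DK) P (C + DK)^T) \<le> trace Q \<le> \<gamma>^2.
  The condition R \<in> \<Upsilon>(S) says that every S_j R is a combination of the S_l, so right
  multiplication by R maps span S injectively into itself, hence onto it; as K R = L \<in> span S,
  also K \<in> span S.\<close>

lemma sum_UNIV_Plus:
  "sum f (UNIV :: ('a::finite + 'b::finite) set) = (\<Sum>a\<in>UNIV. f (Inl a)) + (\<Sum>b\<in>UNIV. f (Inr b))"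
  using sum.Plus[of "UNIV :: 'a set" "UNIV :: 'b set" f] by (simp add: comp_def)

definition join_vec :: "real^'a \<Rightarrow> real^'b \<Rightarrow> real^('a + 'b)" where
  "join_vec u v = (\<chi> i. case i of Inl a \<Rightarrow> u $ a | Inr b \<Rightarrow> v $ b)"

lemma join_vec_eq_0_iff: "join_vec u v = 0 \<longleftrightarrow> u = 0 \<and> v = 0"
  unfolding join_vec_def vec_eq_iff by (auto split: sum.splits)

lemma quadratic_form_block2:
  "join_vec u v \<bullet> (block2 M11 M12 M21 M22 *v join_vec u v) =
    u \<bullet> (M11 *v u) + u \<bullet> (M12 *v v) + v \<bullet> (M21 *v u) + v \<bullet> (M22 *v v)"
  unfolding join_vec_def block2_def inner_vec_def matrix_vector_mult_def
  by (simp add: sum_UNIV_Plus sum.distrib sum_distrib_left algebra_simps)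

lemma inner_vector_matrix_mult: "v \<bullet> (u v* M) = u \<bullet> (M *v v)"
  for M :: "real^'a^'b"
  by (metis dot_lmul_matrix inner_commute)

lemma inner_sym_mat_commute: "sym_mat P \<Longrightarrow> v \<bullet> (P *v y) = y \<bullet> (P *v v)"
  unfolding sym_mat_def by (metis inner_vector_matrix_mult transpose_matrix_vector)

lemma quadratic_form_add_transpose_diff:
  "v \<bullet> ((R + transpose R - P) *v v) = 2 * (v \<bullet> (R *v v)) - v \<bullet> (P *v v)"
  for R P :: "real^'n^'n"
  by (simp add: algebra_simps inner_vector_matrix_mult)

lemma quadratic_form_mult_transpose: "x \<bullet> ((E ** transpose E) *v x) = (x v* E) \<bullet> (x v* E)"
  for E :: "real^'z^'n"
  by (metis dot_lmul_matrix matrix_vector_mul_assoc transpose_matrix_vector)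

lemma matrix_inv_right: "invertible A \<Longrightarrow> A ** matrix_inv A = mat 1"
  and matrix_inv_left: "invertible A \<Longrightarrow> matrix_inv A ** A = mat 1"
  unfolding invertible_def matrix_inv_def by (metis (mono_tags, lifting) someI_ex)+

lemma matrix_add_rdistrib: "(X + Y) ** Z = X ** Z + Y ** Z"
  for X Y :: "real^'a^'b"
  by (simp add: vec_eq_iff matrix_matrix_mult_def distrib_right sum.distrib)

lemma linear_matrix_mult_right: "linear (\<lambda>X::real^'a^'b. X ** R)"
  by (rule linearI)
    (simp_all add: vec_eq_iff matrix_matrix_mult_def sum_distrib_left distrib_right sum.distrib mult.assoc)

lemma linear_inj_on_self_map_surj:
  fixes f :: "'a::euclidean_space \<Rightarrow> 'a"
  assumes "linear f" "subspace V" "inj_on f V" "f ` V \<subseteq> V"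
  shows "f ` V = V"
proof (rule subspace_dim_equal)
  show "subspace (f ` V)" by (rule linear_subspace_image[OF assms(1,2)])
  show "dim V \<le> dim (f ` V)"
    using dim_image_eq[OF assms(1), of V, unfolded span_eq_iff[THEN iffD2, OF assms(2)]] assms(3)
    by simp
qed (use assms in auto)

lemma pos_def_imp_nonneg: "pos_def M \<Longrightarrow> 0 \<le> x \<bullet> (M *v x)"
  unfolding pos_def_def by (cases "x = 0") (auto intro: less_imp_le)

lemma pos_def_block2_lower_right:
  assumes "pos_def (block2 M11 M12 M21 M22)" "v \<noteq> 0"
  shows "0 < v \<bullet> (M22 *v v)"
proof -
  have "0 < join_vec 0 v \<bullet> (block2 M11 M12 M21 M22 *v join_vec 0 v)"
    using assms unfolding pos_def_def by (simp add: join_vec_eq_0_iff)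
  then show ?thesis by (simp add: quadratic_form_block2)
qed

lemma invertible_if_sym_part_dominates:
  fixes R P :: "real^'n^'n"
  assumes dom: "\<And>v. v \<noteq> 0 \<Longrightarrow> 0 < v \<bullet> ((R + transpose R - P) *v v)"
    and P_nonneg: "\<And>v. 0 \<le> v \<bullet> (P *v v)"
  shows "invertible R"
proof -
  have "v = 0" if "R *v v = 0" for v
    using dom[of v] P_nonneg[of v] that by (force simp: quadratic_form_add_transpose_diff)
  then show ?thesis
    by (simp add: invertible_left_inverse matrix_left_invertible_ker)
qed

lemma congruence_le_of_dilated_lmi:
  fixes W :: "real^'a^'a" and G :: "real^'n^'a" and R P :: "real^'n^'n"
  assumes block: "\<And>w. 0 \<le> w \<bullet> (block2 W (G ** R) (transpose (G ** R)) (R + transpose R - P) *v w)"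
    and P_sym: "sym_mat P" and P_nonneg: "\<And>x. 0 \<le> x \<bullet> (P *v x)"
    and R_inv: "invertible R"
  shows "(u v* G) \<bullet> (P *v (u v* G)) \<le> u \<bullet> (W *v u)"
proof -
  define y where "y = u v* G"
  define v where "v = - (matrix_inv R *v (P *v y))"
  have "R *v v = - (R *v (matrix_inv R *v (P *v y)))"
    by (simp only: v_def linear_neg[OF matrix_vector_mul_linear])
  also have "\<dots> = - (P *v y)"
    by (metis matrix_vector_mul_assoc matrix_inv_right[OF R_inv] matrix_vector_mul_lid)
  finally have Rv: "R *v v = - (P *v y)" .
  have cross: "u \<bullet> ((G ** R) *v v) = - (y \<bullet> (P *v y))"
    by (simp add: y_def Rv dot_lmul_matrix linear_neg[OF matrix_vector_mul_linear]
        flip: matrix_vector_mul_assoc)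
  have "0 \<le> join_vec u v \<bullet> (block2 W (G ** R) (transpose (G ** R)) (R + transpose R - P) *v join_vec u v)"
    by (rule block)
  then have "0 \<le> u \<bullet> (W *v u) - 2 * (y \<bullet> (P *v y)) - 2 * (v \<bullet> (P *v y)) - v \<bullet> (P *v v)"
    by (simp add: quadratic_form_block2 inner_vector_matrix_mult cross
        quadratic_form_add_transpose_diff Rv)
  moreover have "0 \<le> v \<bullet> (P *v v) + 2 * (v \<bullet> (P *v y)) + y \<bullet> (P *v y)"
    using P_nonneg[of "v + y"] inner_sym_mat_commute[OF P_sym, of v y]
    by (simp add: algebra_simps)
  ultimately show ?thesis
    unfolding y_def by linarith
qed

lemma gramian_partial_sum_le:
  fixes M P :: "real^'n^'n" and E :: "real^'z^'n"
  assumes lyap: "\<And>x. (x v* M) \<bullet> (P *v (x v* M)) \<le> x \<bullet> ((P - E ** transpose E) *v x)"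
    and P_nonneg: "\<And>x. 0 \<le> x \<bullet> (P *v x)"
  shows "(\<Sum>t<N. (x v* matpow M t v* E) \<bullet> (x v* matpow M t v* E)) \<le> x \<bullet> (P *v x)"
proof (induction N arbitrary: x)
  case 0
  then show ?case by (simp add: P_nonneg)
next
  case (Suc N)
  have "(\<Sum>t<Suc N. (x v* matpow M t v* E) \<bullet> (x v* matpow M t v* E))
      = (x v* E) \<bullet> (x v* E) + (\<Sum>t<N. ((x v* M) v* matpow M t v* E) \<bullet> ((x v* M) v* matpow M t v* E))"
    by (simp only: sum.lessThan_Suc_shift) (simp add: vector_matrix_mul_assoc)
  also have "\<dots> \<le> (x v* E) \<bullet> (x v* E) + (x v* M) \<bullet> (P *v (x v* M))"
    using Suc.IH[of "x v* M"] by simp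
  also have "\<dots> \<le> x \<bullet> (P *v x)"
    using lyap[of x] by (simp add: algebra_simps quadratic_form_mult_transpose)
  finally show ?case .
qed

lemma trace_mult_transpose_self:
  "trace (G ** transpose G) = (\<Sum>i\<in>UNIV. (axis i 1 v* G) \<bullet> (axis i 1 v* G))"
  for G :: "real^'a^'b"
proof -
  have "(axis i 1 v* G) $ j = G $ i $ j" for i j
    unfolding vector_matrix_mult_def axis_def
    by (simp add: if_distrib[of "\<lambda>a. a * _"] cong: if_cong)
  then show ?thesis
    unfolding trace_def inner_vec_def by (simp add: matrix_matrix_mult_def transpose_def)
qed

lemma trace_eq_sum_axis_forms: "trace Q = (\<Sum>i\<in>UNIV. axis i 1 \<bullet> (Q *v axis i 1))"
  for Q :: "real^'a^'a"
  by (simp add: trace_def inner_axis' matrix_vector_mult_basis column_def)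

lemma markov_sq_eq_sum_rows:
  "markov_sq M E Cc t = (\<Sum>i\<in>UNIV. (axis i 1 v* Cc v* matpow M t v* E) \<bullet> (axis i 1 v* Cc v* matpow M t v* E))"
  unfolding markov_sq_def Let_def trace_mult_transpose_self by (simp add: vector_matrix_mul_assoc)

lemma markov_sq_nonneg: "0 \<le> markov_sq M E Cc t"
  unfolding markov_sq_eq_sum_rows by (intro sum_nonneg) simp

lemma markov_partial_sum_le_trace:
  fixes M P :: "real^'n^'n" and E :: "real^'z^'n" and Cc :: "real^'n^'q" and Q :: "real^'q^'q"
  assumes lyap: "\<And>x. (x v* M) \<bullet> (P *v (x v* M)) \<le> x \<bullet> ((P - E ** transpose E) *v x)"
    and out_bound: "\<And>u. (u v* Cc) \<bullet> (P *v (u v* Cc)) \<le> u \<bullet> (Q *v u)"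
    and P_nonneg: "\<And>x. 0 \<le> x \<bullet> (P *v x)"
  shows "(\<Sum>t<N. markov_sq M E Cc t) \<le> trace Q"
proof -
  have "(\<Sum>t<N. markov_sq M E Cc t) =
      (\<Sum>i\<in>UNIV. \<Sum>t<N. (axis i 1 v* Cc v* matpow M t v* E) \<bullet> (axis i 1 v* Cc v* matpow M t v* E))"
    unfolding markov_sq_eq_sum_rows by (rule sum.swap)
  also have "\<dots> \<le> (\<Sum>i\<in>UNIV. (axis i 1 v* Cc) \<bullet> (P *v (axis i 1 v* Cc)))"
    by (intro sum_mono gramian_partial_sum_le[OF lyap P_nonneg])
  also have "\<dots> \<le> (\<Sum>i\<in>UNIV. axis i 1 \<bullet> (Q *v axis i 1))"
    by (intro sum_mono out_bound)
  finally show ?thesis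
    by (simp add: trace_eq_sum_axis_forms)
qed

lemma h2_norm_le_if_partial_sums_le:
  assumes "0 \<le> \<gamma>" and partial: "\<And>N. (\<Sum>t<N. markov_sq Ac Ec Cc t) \<le> \<gamma>\<^sup>2"
  shows "h2_norm Ac Ec Cc \<le> ereal \<gamma>"
proof -
  have sums: "summable (markov_sq Ac Ec Cc)"
    by (rule summableI_nonneg_bounded[OF markov_sq_nonneg partial])
  have "suminf (markov_sq Ac Ec Cc) \<le> \<gamma>\<^sup>2"
    by (rule suminf_le_const[OF sums partial])
  then have "sqrt (suminf (markov_sq Ac Ec Cc)) \<le> \<gamma>"
    using \<open>0 \<le> \<gamma>\<close> real_le_lsqrt by blast
  then show ?thesis
    unfolding h2_norm_def using sums by simp
qed

lemma rep_matrix_mult_kron: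
  "rep_matrix Sf ** kron X Y = rep_matrix (\<lambda>j. \<Sum>l\<in>UNIV. X $ l $ j *\<^sub>R (Sf l ** Y))"
proof (intro vec_eq_iff[THEN iffD2] allI)
  fix i jc
  have "(rep_matrix Sf ** kron X Y) $ i $ jc =
      (\<Sum>l\<in>UNIV. \<Sum>b\<in>UNIV. Sf l $ i $ b * (X $ l $ fst jc * Y $ b $ snd jc))"
    unfolding rep_matrix_def kron_def matrix_matrix_mult_def
    by (simp add: sum.cartesian_product case_prod_beta flip: UNIV_Times_UNIV)
  also have "\<dots> = rep_matrix (\<lambda>j. \<Sum>l\<in>UNIV. X $ l $ j *\<^sub>R (Sf l ** Y)) $ i $ jc"
    unfolding rep_matrix_def matrix_matrix_mult_def
    by (simp add: sum_distrib_left mult_ac)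
  finally show "(rep_matrix Sf ** kron X Y) $ i $ jc =
      rep_matrix (\<lambda>j. \<Sum>l\<in>UNIV. X $ l $ j *\<^sub>R (Sf l ** Y)) $ i $ jc" .
qed

lemma rep_matrix_inject: "rep_matrix F = rep_matrix G \<longleftrightarrow> F = G"
proof
  assume eq: "rep_matrix F = rep_matrix G"
  show "F = G"
  proof
    fix j
    have "F j $ i $ c = G j $ i $ c" for i c
      using arg_cong[where f="\<lambda>M. M $ i $ (j, c)", OF eq] by (simp add: rep_matrix_def)
    then show "F j = G j"
      by (simp add: vec_eq_iff)
  qed
qed simp

lemma sum_mat_1_scaleR: "(\<Sum>l\<in>UNIV. (mat 1 :: real^'k^'k) $ l $ j *\<^sub>R F l) = (F j :: 'a::real_vector)"
  unfolding mat_def by (simp add: if_distrib[of "\<lambda>a. a *\<^sub>R _"] cong: if_cong)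

lemma Upsilon_mult_in_span:
  fixes Sf :: "'k::finite \<Rightarrow> real^'n^'m"
  assumes "R \<in> Upsilon (rep_matrix Sf)"
  shows "Sf j ** R \<in> span (range Sf)"
proof -
  obtain \<Lambda> :: "real^'k^'k" where
    "rep_matrix Sf ** kron (mat 1 :: real^'k^'k) R = rep_matrix Sf ** kron \<Lambda> (mat 1 :: real^'n^'n)"
    using assms unfolding Upsilon_def by blast
  then have "(\<Sum>l\<in>UNIV. (mat 1 :: real^'k^'k) $ l $ j *\<^sub>R (Sf l ** R)) = (\<Sum>l\<in>UNIV. \<Lambda> $ l $ j *\<^sub>R Sf l)"
    by (simp add: rep_matrix_mult_kron rep_matrix_inject fun_eq_iff)
  then have "Sf j ** R = (\<Sum>l\<in>UNIV. \<Lambda> $ l $ j *\<^sub>R Sf l)"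
    by (simp add: sum_mat_1_scaleR)
  also have "\<dots> \<in> span (range Sf)"
    by (intro span_sum span_mul span_base) auto
  finally show ?thesis .
qed
lemma matrix_inv_mult_in_span_if_Upsilon:
  fixes Sf :: "'k::finite \<Rightarrow> real^'n^'m"
  assumes "R \<in> Upsilon (rep_matrix Sf)" "invertible R" "L \<in> span (range Sf)"
  shows "L ** matrix_inv R \<in> span (range Sf)"
proof -
  let ?f = "\<lambda>X::real^'n^'m. X ** R"
  have cancel: "X ** R ** matrix_inv R = X" for X :: "real^'n^'m"
    by (simp add: matrix_inv_right[OF assms(2)] flip: matrix_mul_assoc)
  have "?f ` span (range Sf) = span (?f ` range Sf)"
    by (rule linear_span_image[OF linear_matrix_mult_right, symmetric])
  also have "\<dots> \<subseteq> span (range Sf)"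
    using Upsilon_mult_in_span[OF assms(1)] by (intro span_minimal) auto
  finally have "?f ` span (range Sf) = span (range Sf)"
    using linear_matrix_mult_right subspace_span
    by (rule linear_inj_on_self_map_surj[rotated 3]) (metis inj_onI cancel)
  then obtain X where "X \<in> span (range Sf)" "L = X ** R"
    using assms(3) by blast
  then show ?thesis
    by (simp add: cancel)
qed

theorem lemma4:
  fixes A :: "real^'n^'n" and B :: "real^'m^'n" and E :: "real^'z^'n"
    and C :: "real^'n^'q" and D :: "real^'m^'q" and \<gamma> :: real
    and \<S> :: "(real^'n^'m) set" and Sf :: "'k::finite \<Rightarrow> real^'n^'m"
    and P :: "real^'n^'n" and Q :: "real^'q^'q" and R :: "real^'n^'n" and L :: "real^'n^'m"
  assumes "\<gamma> \<ge> 0"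
    and "subspace \<S>"
    and "inj Sf" and "independent (range Sf)" and "span (range Sf) = \<S>"
    and "sym_mat P" and "sym_mat Q"
    and "R \<in> Upsilon (rep_matrix Sf)" and "L \<in> \<S>"
    and "pos_def (block2 (P - E ** transpose E) (A ** R + B ** L)
                         (transpose (A ** R + B ** L)) (R + transpose R - P))"
    and "pos_def (block2 Q (C ** R + D ** L)
                         (transpose (C ** R + D ** L)) (R + transpose R - P))"
    and "pos_def P"
    and "trace Q \<le> \<gamma>\<^sup>2"
  shows "invertible R \<and> L ** matrix_inv R \<in> \<S> \<and>
         gamma_subopt_H2 A B E C D \<gamma> (L ** matrix_inv R)"
proof -
  note P_nonneg = pos_def_imp_nonneg[OF \<open>pos_def P\<close>]
  have R_inv: "invertible R"
    using pos_def_block2_lower_right[OF assms(10)] P_nonneg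
    by (rule invertible_if_sym_part_dominates)
  define K where "K = L ** matrix_inv R"
  have "K ** R = L"
    by (simp add: K_def matrix_inv_left[OF R_inv] flip: matrix_mul_assoc)
  then have closed_loop: "A ** R + B ** L = (A + B ** K) ** R" "C ** R + D ** L = (C + D ** K) ** R"
    by (simp_all add: matrix_add_rdistrib flip: matrix_mul_assoc)
  have lyap: "(x v* (A + B ** K)) \<bullet> (P *v (x v* (A + B ** K))) \<le> x \<bullet> ((P - E ** transpose E) *v x)" for x
    by (rule congruence_le_of_dilated_lmi[OF pos_def_imp_nonneg[OF assms(10)[unfolded closed_loop]]
          \<open>sym_mat P\<close> P_nonneg R_inv])
  have out: "(u v* (C + D ** K)) \<bullet> (P *v (u v* (C + D ** K))) \<le> u \<bullet> (Q *v u)" for u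
    by (rule congruence_le_of_dilated_lmi[OF pos_def_imp_nonneg[OF assms(11)[unfolded closed_loop]]
          \<open>sym_mat P\<close> P_nonneg R_inv])
  have "h2_norm (A + B ** K) E (C + D ** K) \<le> ereal \<gamma>"
    using \<open>\<gamma> \<ge> 0\<close> order_trans[OF markov_partial_sum_le_trace[OF lyap out P_nonneg] \<open>trace Q \<le> \<gamma>\<^sup>2\<close>]
    by (rule h2_norm_le_if_partial_sums_le)
  moreover have "K \<in> \<S>"
    unfolding K_def using matrix_inv_mult_in_span_if_Upsilon[OF assms(8) R_inv] assms(5,9) by simp
  ultimately show ?thesis
    unfolding gamma_subopt_H2_def K_def[symmetric] using R_inv by blast
qed

end
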